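(* If $X$ is a crowded submaximal (Tychonoff) space, then $X$ has the property $(\kappa)$.
   Context: A space is crowded if it is non-empty and has no isolated points; it is submaximal if every dense subset is open. A family $\{A_\alpha\}$ of subsets of $X$ is strongly point-finite if there are open sets $U_\alpha\supseteq A_\alpha$ such that each point of $X$ lies in only finitely many $U_\alpha$. $X$ has property $(\kappa)$ if every pairwise disjoint sequence of finite subsets of $X$ has a strongly point-finite subsequence. All spaces are assumed Tychonoff. *)

theory Defs
  imports "HOL-Analysis.Analysis"
begin

definition tychonoff_space :: "'a topology \<Rightarrow> bool" where
  "tychonoff_space X \<longleftrightarrow> t1_space X \<and> completely_regular_space X"

definition crowded :: "'a topology \<Rightarrow> bool" where
  "crowded X \<longleftrightarrow> topspace X \<noteq> {} \<and> (\<forall>x \<in> topspace X. \<not> openin X {x})"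

definition submaximal :: "'a topology \<Rightarrow> bool" where
  "submaximal X \<longleftrightarrow>
     (\<forall>D. D \<subseteq> topspace X \<and> X closure_of D = topspace X \<longrightarrow> openin X D)"

definition strongly_point_finite :: "'a topology \<Rightarrow> (nat \<Rightarrow> 'a set) \<Rightarrow> bool" where
  "strongly_point_finite X A \<longleftrightarrow>
     (\<exists>U. (\<forall>n. openin X (U n) \<and> A n \<subseteq> U n) \<and>
          (\<forall>x \<in> topspace X. finite {n. x \<in> U n}))"

definition property_kappa :: "'a topology \<Rightarrow> bool" where
  "property_kappa X \<longleftrightarrow>
     (\<forall>F :: nat \<Rightarrow> 'a set.
        (\<forall>n. finite (F n) \<and> F n \<subseteq> topspace X) \<and>
        (\<forall>m n. m \<noteq> n \<longrightarrow> F m \<inter> F n = {}) \<longrightarrow>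
        (\<exists>r. strict_mono r \<and> strongly_point_finite X (F \<circ> r)))"

end

theory Submission
  imports Defs "HOL-Library.Countable"
begin

text \<open>
  A nonempty open subset of a crowded T1 space is infinite. Index an uncountable almost disjoint
  family of infinite sets of naturals by the branches of the binary tree; if for every member
  \<open>A\<close> the union of the \<open>F n\<close>, \<open>n \<in> A\<close>, had nonempty interior, points chosen in these
  interiors would be pairwise distinct (two interiors meet in an open set covered by finitely
  many \<open>F n\<close>), embedding an uncountable set into the countable set \<open>\<Union>n. F n\<close>. So some
  infinite \<open>S\<close> gives a union \<open>D\<close> with empty interior. In a submaximal space every set with
  empty interior is closed, so every subset of \<open>D\<close> is closed and \<open>D\<close> is closed discrete;
  regularity then separates each finite \<open>F n\<close>, \<open>n \<in> S\<close>, from the rest of \<open>D\<close>, and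
  shrinking these neighbourhoods gives pairwise disjoint open expansions.
\<close>

lemma uncountable_UNIV_nat_bool: "uncountable (UNIV :: (nat \<Rightarrow> bool) set)"
proof
  assume "countable (UNIV :: (nat \<Rightarrow> bool) set)"
  then obtain g :: "nat \<Rightarrow> nat \<Rightarrow> bool" where "range g = UNIV"
    using uncountable_def by blast
  then obtain n where "g n = (\<lambda>k. \<not> g k k)"
    by (metis UNIV_I imageE)
  then show False
    by metis
qed

definition branch_nodes :: "(nat \<Rightarrow> bool) \<Rightarrow> nat set" where
  "branch_nodes h = range (\<lambda>n. to_nat (map h [0..<n]))"

lemma infinite_branch_nodes: "infinite (branch_nodes h)"
proof -
  have "inj (\<lambda>n. to_nat (map h [0..<n]))"
    by (rule injI) (metis inj_to_nat injD length_map length_upt minus_nat.diff_0)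
  then show ?thesis
    unfolding branch_nodes_def by (rule range_inj_infinite)
qed

lemma finite_branch_nodes_Int:
  assumes "f \<noteq> g"
  shows "finite (branch_nodes f \<inter> branch_nodes g)"
proof -
  obtain k where k: "f k \<noteq> g k"
    using assms by auto
  have "branch_nodes f \<inter> branch_nodes g \<subseteq> (\<lambda>n. to_nat (map f [0..<n])) ` {..k}"
  proof
    fix x assume "x \<in> branch_nodes f \<inter> branch_nodes g"
    then obtain n m where x: "x = to_nat (map f [0..<n])" "x = to_nat (map g [0..<m])"
      unfolding branch_nodes_def by blast
    then have prefix: "map f [0..<n] = map g [0..<m]"
      by (metis inj_to_nat injD)
    then have "n = m"
      by (metis length_map length_upt minus_nat.diff_0)
    have "n \<le> k"
    proof (rule ccontr)
      assume "\<not> n \<le> k"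
      then have "map f [0..<n] ! k = f k" "map g [0..<m] ! k = g k"
        using \<open>n = m\<close> by auto
      then show False
        using prefix k by simp
    qed
    then show "x \<in> (\<lambda>n. to_nat (map f [0..<n])) ` {..k}"
      using x by auto
  qed
  then show ?thesis
    by (rule finite_subset) simp
qed

lemma uncountable_almost_disjoint_family:
  obtains \<A> :: "nat set set"
  where "uncountable \<A>" "\<And>A. A \<in> \<A> \<Longrightarrow> infinite A"
    "pairwise (\<lambda>A B. finite (A \<inter> B)) \<A>"
proof
  have "inj branch_nodes"
    by (metis finite_branch_nodes_Int infinite_branch_nodes inf.idem injI)
  then show "uncountable (range branch_nodes)"
    using uncountable_UNIV_nat_bool countable_image_inj_on by blast
  show "\<And>A. A \<in> range branch_nodes \<Longrightarrow> infinite A"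
    using infinite_branch_nodes by blast
  show "pairwise (\<lambda>A B. finite (A \<inter> B)) (range branch_nodes)"
    unfolding pairwise_def by (metis finite_branch_nodes_Int imageE)
qed

lemma t1_crowded_finite_openin_empty:
  assumes "t1_space X" "crowded X" "openin X V" "finite V"
  shows "V = {}"
proof (rule ccontr)
  assume "V \<noteq> {}"
  then obtain x where x: "x \<in> V"
    by auto
  have V: "V \<subseteq> topspace X"
    using assms(3) openin_subset by blast
  have "closedin X (V - {x})"
    using assms(1,4) V t1_space_closedin_finite by (metis Diff_subset finite_Diff order_trans)
  then have "openin X (V \<inter> (topspace X - (V - {x})))"
    using assms(3) by blast
  moreover have "V \<inter> (topspace X - (V - {x})) = {x}"
    using x V by auto
  ultimately show False
    using assms(2) x V unfolding crowded_def by auto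
qed

lemma disjoint_family_UN_Int_subset:
  assumes "disjoint_family F"
  shows "(\<Union>n\<in>A. F n) \<inter> (\<Union>n\<in>B. F n) \<subseteq> (\<Union>n\<in>A \<inter> B. F n)"
proof
  fix x assume "x \<in> (\<Union>n\<in>A. F n) \<inter> (\<Union>n\<in>B. F n)"
  then obtain a b where ab: "a \<in> A" "b \<in> B" "x \<in> F a" "x \<in> F b"
    by blast
  then have "a = b"
    using assms unfolding disjoint_family_on_def by blast
  with ab show "x \<in> (\<Union>n\<in>A \<inter> B. F n)"
    by blast
qed

lemma t1_crowded_interior_of_UN_Int_eq_empty:
  assumes t1: "t1_space X" and crowded: "crowded X"
    and finite: "\<And>n. finite (F n)" and disjoint: "disjoint_family F" and "finite (A \<inter> B)"
  shows "X interior_of (\<Union>n\<in>A. F n) \<inter> X interior_of (\<Union>n\<in>B. F n) = {}"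
proof (rule t1_crowded_finite_openin_empty[OF t1 crowded])
  show "openin X (X interior_of (\<Union>n\<in>A. F n) \<inter> X interior_of (\<Union>n\<in>B. F n))"
    by (intro openin_Int openin_interior_of)
  have "X interior_of (\<Union>n\<in>A. F n) \<inter> X interior_of (\<Union>n\<in>B. F n) \<subseteq> (\<Union>n\<in>A \<inter> B. F n)"
    using Int_mono[OF interior_of_subset interior_of_subset] disjoint_family_UN_Int_subset[OF disjoint]
    by (rule order_trans)
  moreover have "finite (\<Union>n\<in>A \<inter> B. F n)"
    using \<open>finite (A \<inter> B)\<close> by (simp add: finite)
  ultimately show "finite (X interior_of (\<Union>n\<in>A. F n) \<inter> X interior_of (\<Union>n\<in>B. F n))"
    by (rule finite_subset)
qed

lemma t1_crowded_ex_infinite_union_interior_empty: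
  fixes F :: "nat \<Rightarrow> 'a set"
  assumes t1: "t1_space X" and crowded: "crowded X"
    and finite: "\<And>n. finite (F n)" and disjoint: "disjoint_family F"
  obtains S where "infinite S" "X interior_of (\<Union>n\<in>S. F n) = {}"
proof -
  obtain \<A> :: "nat set set" where unc: "uncountable \<A>" and inf: "\<And>A. A \<in> \<A> \<Longrightarrow> infinite A"
    and almost_disjoint: "pairwise (\<lambda>A B. finite (A \<inter> B)) \<A>"
    using uncountable_almost_disjoint_family by blast
  define W where "W A = X interior_of (\<Union>n\<in>A. F n)" for A
  have "\<exists>A\<in>\<A>. W A = {}"
  proof (rule ccontr)
    assume no_empty: "\<not> ?thesis"
    define p where "p A = (SOME x. x \<in> W A)" for A
    have p: "p A \<in> W A" if "A \<in> \<A>" for A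
      unfolding p_def using no_empty that by (simp add: some_in_eq)
    have inj: "inj_on p \<A>"
    proof (rule inj_onI, rule ccontr)
      fix A B assume AB: "A \<in> \<A>" "B \<in> \<A>" "p A = p B" "A \<noteq> B"
      then have "finite (A \<inter> B)"
        using almost_disjoint unfolding pairwise_def by blast
      then have "W A \<inter> W B = {}"
        unfolding W_def by (rule t1_crowded_interior_of_UN_Int_eq_empty[OF t1 crowded finite disjoint])
      then show False
        using p[OF \<open>A \<in> \<A>\<close>] p[OF \<open>B \<in> \<A>\<close>] \<open>p A = p B\<close> by (metis IntI empty_iff)
    qed
    have "W A \<subseteq> (\<Union>n. F n)" for A
      unfolding W_def by (rule order_trans[OF interior_of_subset]) blast
    then have "p ` \<A> \<subseteq> (\<Union>n. F n)"
      using p by blast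
    moreover have "countable (\<Union>n. F n)"
      by (simp add: countable_finite finite)
    ultimately have "countable (p ` \<A>)"
      by (rule countable_subset)
    with inj unc show False
      using countable_image_inj_on by blast
  qed
  then show ?thesis
    using that inf unfolding W_def by blast
qed

lemma submaximal_closedin_subset_interior_empty:
  assumes "submaximal X" "D \<subseteq> topspace X" "X interior_of D = {}" "A \<subseteq> D"
  shows "closedin X A"
proof -
  have "X interior_of A = {}"
    using assms(3,4) interior_of_mono by blast
  then have "X closure_of (topspace X - A) = topspace X"
    by (simp add: closure_of_complement)
  then have "openin X (topspace X - A)"
    using assms(1) unfolding submaximal_def by blast
  then show ?thesis
    using assms(2,4) by (simp add: closedin_def)
qed

lemma regular_space_compact_closed_separation_closure:
  assumes "regular_space X" "compactin X K" "closedin X C" "disjnt K C"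
  obtains N where "openin X N" "K \<subseteq> N" "disjnt (X closure_of N) C"
proof -
  obtain U V where UV: "openin X U" "openin X V" "K \<subseteq> U" "C \<subseteq> V" "disjnt U V"
    using regular_space_compact_closed_separation[OF assms] by blast
  then have "V \<inter> X closure_of U = {}"
    using openin_Int_closure_of_eq_empty by (metis disjnt_def inf_commute)
  then have "disjnt (X closure_of U) C"
    using UV(4) by (auto simp: disjnt_def)
  with UV(1,3) that show ?thesis
    by blast
qed

lemma regular_space_disjoint_open_expansion:
  fixes G :: "nat \<Rightarrow> 'a set"
  assumes regular: "regular_space X" and compact: "\<And>k. compactin X (G k)"
    and disjoint: "disjoint_family G" and closed: "\<And>k. closedin X (\<Union>j\<in>-{k}. G j)"
  obtains U where "\<And>k. openin X (U k)" "\<And>k. G k \<subseteq> U k" "disjoint_family U"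
proof -
  have "\<exists>N. openin X N \<and> G k \<subseteq> N \<and> disjnt (X closure_of N) (\<Union>j\<in>-{k}. G j)" for k
  proof (rule regular_space_compact_closed_separation_closure[OF regular compact closed])
    show "disjnt (G k) (\<Union>j\<in>-{k}. G j)"
      using disjoint unfolding disjoint_family_on_def disjnt_def by blast
  qed blast
  then obtain N where N: "\<And>k. openin X (N k)" "\<And>k. G k \<subseteq> N k"
    "\<And>k. disjnt (X closure_of N k) (\<Union>j\<in>-{k}. G j)"
    by metis
  define U where "U k = N k - (\<Union>j<k. X closure_of N j)" for k
  show ?thesis
  proof
    show "openin X (U k)" for k
      unfolding U_def by (intro openin_diff N(1) closedin_Union) auto
    show "G k \<subseteq> U k" for k
      using N(2,3) unfolding U_def disjnt_def by fastforce
    have "U j \<inter> U k = {}" if "j < k" for j k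
    proof -
      have "U j \<subseteq> X closure_of N j"
        unfolding U_def using closure_of_subset[OF openin_subset[OF N(1)]] by blast
      then show ?thesis
        unfolding U_def using that by blast
    qed
    then show "disjoint_family U"
      unfolding disjoint_family_on_def by (metis Int_commute linorder_neqE_nat)
  qed
qed

lemma disjoint_open_expansion_imp_strongly_point_finite:
  assumes "\<And>k. openin X (U k)" "\<And>k. A k \<subseteq> U k" "disjoint_family U"
  shows "strongly_point_finite X A"
proof -
  have "{n. x \<in> U n} \<subseteq> {m}" if "x \<in> U m" for x m
    using assms(3) that unfolding disjoint_family_on_def by blast
  then have "finite {n. x \<in> U n}" for x
    by (cases "\<exists>m. x \<in> U m") (auto intro: finite_subset)
  then show ?thesis
    unfolding strongly_point_finite_def using assms(1,2) by blast
qed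

theorem mainTheorem4:
  fixes X :: "'a topology"
  assumes "tychonoff_space X" and "crowded X" and "submaximal X"
  shows "property_kappa X"
  unfolding property_kappa_def
proof (intro allI impI)
  fix F :: "nat \<Rightarrow> 'a set"
  assume "(\<forall>n. finite (F n) \<and> F n \<subseteq> topspace X) \<and> (\<forall>m n. m \<noteq> n \<longrightarrow> F m \<inter> F n = {})"
  then have finite: "\<And>n. finite (F n)" and F_sub: "\<And>n. F n \<subseteq> topspace X"
    and disjoint: "disjoint_family F"
    by (auto simp: disjoint_family_on_def)
  have t1: "t1_space X" and regular: "regular_space X"
    using assms(1) completely_regular_imp_regular_space unfolding tychonoff_space_def by auto
  obtain S where S: "infinite S" and interior: "X interior_of (\<Union>n\<in>S. F n) = {}"
    using t1_crowded_ex_infinite_union_interior_empty[OF t1 assms(2) finite disjoint] by blast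
  define r where "r = enumerate S"
  have r: "strict_mono r" "\<And>k. r k \<in> S"
    unfolding r_def using S by (simp_all add: strict_mono_enumerate enumerate_in_set)
  have "(\<Union>n\<in>S. F n) \<subseteq> topspace X"
    using F_sub by blast
  then have "closedin X (\<Union>j\<in>-{k}. F (r j))" for k
    using r(2) by (intro submaximal_closedin_subset_interior_empty[OF assms(3) _ interior]) blast+
  moreover have "disjoint_family (F \<circ> r)"
    using disjoint strict_mono_eq[OF r(1)] unfolding disjoint_family_on_def by simp
  moreover have "compactin X (F (r k))" for k
    by (simp add: F_sub finite finite_imp_compactin)
  ultimately obtain U where "\<And>k. openin X (U k)" "\<And>k. (F \<circ> r) k \<subseteq> U k" "disjoint_family U"
    using regular_space_disjoint_open_expansion[OF regular, of "F \<circ> r"] by auto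
  then show "\<exists>r. strict_mono r \<and> strongly_point_finite X (F \<circ> r)"
    using r(1) disjoint_open_expansion_imp_strongly_point_finite by blast
qed

end
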